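(* Let $d\ge 2$ and let $c_0,\dots,c_7\in\mathbb{Z}_d$. If the $d$-state first degree cellular automaton with parameters $\langle c_0,\dots,c_7\rangle$ is reversible for every number of cells $n\in\mathbb{N}$ under the null boundary condition, then $c_4\cdot c_6\equiv 0 \pmod{\mathrm{rad}(d)}$.
   Context: Fix an integer $d\ge 2$ and the state set $S=\mathbb{Z}_d=\{0,1,\dots,d-1\}$. A first degree cellular automaton (FDCA) with parameters $\langle c_0,\dots,c_7\rangle$, $c_i\in\mathbb{Z}_d$, is the one-dimensional 3-neighborhood cellular automaton whose local rule $R:S^3\to S$ is $R(x,y,z)=c_0xyz+c_1xy+c_2xz+c_3yz+c_4x+c_5y+c_6z+c_7 \pmod d$. For $n\in\mathbb{N}$, $n\ge1$, the $n$-cell automaton under the null boundary condition acts on configurations $x=(x_0,\dots,x_{n-1})\in S^n$ by the global map $G_n:S^n\to S^n$, $G_n(x)_i=R(x_{i-1},x_i,x_{i+1})$ for $0\le i\le n-1$, with the convention $x_{-1}=x_n=0$. The automaton is reversible for a given $n$ if $G_n$ is a bijection. $\mathrm{rad}(d)=\prod_{p\mid d,\ p\text{ prime}}p$ is the product of the distinct primes dividing $d$; since $\mathrm{rad}(d)\mid d$, congruences of elements of $\mathbb{Z}_d$ modulo $\mathrm{rad}(d)$ are well defined. *)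

theory Defs
  imports "HOL-Computational_Algebra.Primes"
begin

definition fdca_rule :: "int \<Rightarrow> (nat \<Rightarrow> int) \<Rightarrow> int \<Rightarrow> int \<Rightarrow> int \<Rightarrow> int" where
  "fdca_rule d c x y z =
     (c 0 * x * y * z + c 1 * x * y + c 2 * x * z + c 3 * y * z
      + c 4 * x + c 5 * y + c 6 * z + c 7) mod d"

text \<open>n-cell configurations: functions on cell indices 0..n-1 with values in Z_d,
  extended by 0 outside (this encodes the null boundary x_{-1} = x_n = 0).\<close>

definition configs :: "int \<Rightarrow> nat \<Rightarrow> (nat \<Rightarrow> int) set" where
  "configs d n = {x. \<forall>i. (i < n \<longrightarrow> 0 \<le> x i \<and> x i < d) \<and> (n \<le> i \<longrightarrow> x i = 0)}"

definition global_map :: "int \<Rightarrow> (nat \<Rightarrow> int) \<Rightarrow> nat \<Rightarrow> (nat \<Rightarrow> int) \<Rightarrow> (nat \<Rightarrow> int)" where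
  "global_map d c n x = (\<lambda>i. if i < n then
      fdca_rule d c (if i = 0 then 0 else x (i - 1)) (x i) (if i + 1 < n then x (i + 1) else 0)
    else 0)"

definition reversible :: "int \<Rightarrow> (nat \<Rightarrow> int) \<Rightarrow> nat \<Rightarrow> bool" where
  "reversible d c n \<longleftrightarrow> bij_betw (global_map d c n) (configs d n) (configs d n)"

definition rad :: "int \<Rightarrow> int" where
  "rad d = (\<Prod>p\<in>prime_factors d. p)"

end

theory Submission
  imports Defs "HOL-Number_Theory.Number_Theory"
begin

(* Reduction modulo a prime p dividing d carries the automaton onto the one over Z_p with the
  same coefficients, so injectivity for every n survives. Suppose c4 and c6 are units mod p.
  If the coefficient c0 x y + c2 x + c3 y + c6 of the right neighbour vanishes for some
  x != 0, then the p configurations [..., x, y, z] differing only in the last cell have the same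
  image outside that cell; by counting they exhaust all configurations whose image agrees there,
  which an explicit configuration starting with 0 contradicts. This gives c3 = 0 (n = 2), c1 = 0
  by mirror symmetry, and then c0 = c2 = 0 (n = 3), all mod p. The remaining linear automaton is
  not injective: the sequence u with u0 = 0, u1 = 1 and c4 u(k) + c5 u(k+1) + c6 u(k+2) = 0 is
  purely periodic since c4 is a unit, so u(m) = 0 for some m >= 2, and (u1, ..., u(m-1)) has
  the same image as the zero configuration for n = m - 1. *)

lemma prod_primes_dvd:
  fixes x :: "'a :: factorial_semiring_gcd"
  assumes "finite P" and "\<And>p. p \<in> P \<Longrightarrow> prime p \<and> p dvd x"
  shows "\<Prod>P dvd x"
  using assms
proof (induction P rule: finite_induct)
  case (insert q P)
  have "q \<notin> P" "prime q" "q dvd x" "\<forall>p\<in>P. prime p" using insert by auto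
  then have "coprime q (\<Prod>P)"
    by (intro prod_coprime_right) (metis prime_imp_coprime primes_dvd_imp_eq)
  with insert show ?case by (simp add: divides_mult)
qed simp

lemma prime_cong_solvable:
  fixes p a b :: int
  assumes "prime p" and "\<not> p dvd a"
  obtains x where "0 \<le> x" "x < p" "[a * x = b] (mod p)"
proof -
  have "coprime a p"
    using assms by (meson prime_imp_coprime coprime_commute)
  then obtain iv where iv: "[a * iv = 1] (mod p)"
    using cong_solve_coprime_int by blast
  have "[a * (b * iv mod p) = b * (a * iv)] (mod p)"
    by (simp add: cong_def mod_simps algebra_simps)
  also have "[b * (a * iv) = b * 1] (mod p)"
    by (intro cong_mult cong_refl iv)
  finally show ?thesis
    using that[of "b * iv mod p"] prime_gt_0_int[OF assms(1)] by simp
qed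

definition config_of_list :: "int list \<Rightarrow> nat \<Rightarrow> int" where
  "config_of_list xs = (\<lambda>i. if i < length xs then xs ! i else 0)"

lemma config_of_list_in_configs:
  "set xs \<subseteq> {0..<d} \<Longrightarrow> length xs = n \<Longrightarrow> config_of_list xs \<in> configs d n"
  using nth_mem by (fastforce simp: configs_def config_of_list_def)

lemma configs_eq_image_config_of_list:
  "configs d n = config_of_list ` {xs. set xs \<subseteq> {0..<d} \<and> length xs = n}"
proof (intro equalityI subsetI)
  fix x assume "x \<in> configs d n"
  then have "x = config_of_list (map x [0..<n])" "set (map x [0..<n]) \<subseteq> {0..<d}"
    by (auto simp: configs_def config_of_list_def)
  then show "x \<in> config_of_list ` {xs. set xs \<subseteq> {0..<d} \<and> length xs = n}"
    by auto
qed (auto intro: config_of_list_in_configs)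

lemma finite_configs: "finite (configs d n)"
  unfolding configs_eq_image_config_of_list
  by (intro finite_imageI finite_lists_length_eq) simp

lemma fdca_rule_range: "0 < d \<Longrightarrow> fdca_rule d c x y z \<in> {0..<d}"
  by (simp add: fdca_rule_def)

lemma fdca_rule_cong:
  assumes "[x = x'] (mod m)" "[y = y'] (mod m)" "[z = z'] (mod m)"
  shows "fdca_rule m c x y z = fdca_rule m c x' y' z'"
proof -
  have "[c 0 * x * y * z + c 1 * x * y + c 2 * x * z + c 3 * y * z + c 4 * x + c 5 * y + c 6 * z + c 7
       = c 0 * x' * y' * z' + c 1 * x' * y' + c 2 * x' * z' + c 3 * y' * z' + c 4 * x' + c 5 * y' + c 6 * z' + c 7] (mod m)"
    by (intro cong_add cong_mult cong_refl assms)
  then show ?thesis by (simp add: fdca_rule_def cong_def)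
qed

lemma fdca_rule_mod_dvd: "m dvd d \<Longrightarrow> fdca_rule d c x y z mod m = fdca_rule m c x y z"
  by (simp add: fdca_rule_def mod_mod_cancel)

lemma global_map_range: "0 < d \<Longrightarrow> global_map d c n x i \<in> {0..<d}"
  using fdca_rule_range by (simp add: global_map_def)

lemma global_map_in_configs: "0 < d \<Longrightarrow> global_map d c n x \<in> configs d n"
  by (simp add: configs_def global_map_def fdca_rule_def)

lemma global_map_mod_dvd:
  assumes "m dvd d"
  shows "global_map m c n (\<lambda>i. x i mod m) = (\<lambda>i. global_map d c n x i mod m)"
proof
  fix i
  have "fdca_rule m c (if i = 0 then 0 else x (i - 1) mod m) (x i mod m)
          (if i + 1 < n then x (i + 1) mod m else 0)
      = fdca_rule m c (if i = 0 then 0 else x (i - 1)) (x i) (if i + 1 < n then x (i + 1) else 0)"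
    by (intro fdca_rule_cong) (simp_all add: cong_def)
  then show "global_map m c n (\<lambda>i. x i mod m) i = global_map d c n x i mod m"
    using assms by (simp add: global_map_def fdca_rule_mod_dvd)
qed

lemma inj_on_global_map_if_reversible:
  assumes rev: "reversible d c n" and "0 < m" "m dvd d" "0 < d"
  shows "inj_on (global_map m c n) (configs m n)"
proof (rule finite_surj_inj[OF finite_configs], rule subsetI)
  fix y assume y: "y \<in> configs m n"
  have "m \<le> d" using assms by (simp add: zdvd_imp_le)
  with y have "y \<in> configs d n" by (force simp: configs_def)
  then obtain x where x: "x \<in> configs d n" "y = global_map d c n x"
    using rev unfolding reversible_def bij_betw_def by blast
  have "(\<lambda>i. x i mod m) \<in> configs m n"
    using x(1) \<open>0 < m\<close> by (simp add: configs_def)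
  moreover have "global_map m c n (\<lambda>i. x i mod m) = (\<lambda>i. y i mod m)"
    using global_map_mod_dvd[OF \<open>m dvd d\<close>] x(2) by simp
  moreover have "(\<lambda>i. y i mod m) = y"
  proof
    fix i show "y i mod m = y i"
      using y by (cases "i < n") (simp_all add: configs_def)
  qed
  ultimately show "y \<in> global_map m c n ` configs m n" by (metis image_eqI)
qed

lemma inj_on_global_map_family_exhausts:
  assumes inj: "inj_on (global_map p c n) (configs p n)" and "0 < p"
    and f: "f ` {0..<p} \<subseteq> configs p n" "inj_on f {0..<p}"
    and x: "x \<in> configs p n"
    and agree: "\<And>z i. z \<in> {0..<p} \<Longrightarrow> i \<noteq> j \<Longrightarrow> global_map p c n (f z) i = global_map p c n x i"
  shows "x \<in> f ` {0..<p}"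
proof (rule ccontr)
  \<comment> \<open>otherwise x and the family are p + 1 configurations whose images differ only at cell j\<close>
  assume x_new: "x \<notin> f ` {0..<p}"
  let ?A = "insert x (f ` {0..<p})"
  have off_j: "global_map p c n y i = global_map p c n x i" if "y \<in> ?A" "i \<noteq> j" for y i
    using that agree by blast
  have "inj_on (\<lambda>y. global_map p c n y j) ?A"
  proof (rule inj_onI)
    fix y y' assume yy': "y \<in> ?A" "y' \<in> ?A" "global_map p c n y j = global_map p c n y' j"
    have "global_map p c n y = global_map p c n y'"
    proof
      fix i show "global_map p c n y i = global_map p c n y' i"
        using yy'(3) off_j[OF yy'(1)] off_j[OF yy'(2)] by (cases "i = j") auto
    qed
    moreover have "?A \<subseteq> configs p n" using f(1) x by blast
    ultimately show "y = y'" using inj yy'(1,2) by (meson inj_onD subsetD)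
  qed
  moreover have "(\<lambda>y. global_map p c n y j) ` ?A \<subseteq> {0..<p}"
    using global_map_range[OF \<open>0 < p\<close>] by blast
  ultimately have "card ?A \<le> card {0..<p}"
    by (meson card_inj_on_le finite_atLeastLessThan_int)
  moreover have "card ?A = card {0..<p} + 1"
    using x_new f(2) by (simp add: card_image)
  ultimately show False by simp
qed

definition mirror_coeffs :: "(nat \<Rightarrow> int) \<Rightarrow> nat \<Rightarrow> int" where
  "mirror_coeffs c i =
     (if i = 1 then c 3 else if i = 3 then c 1 else if i = 4 then c 6 else if i = 6 then c 4 else c i)"

definition reverse_config :: "nat \<Rightarrow> (nat \<Rightarrow> int) \<Rightarrow> nat \<Rightarrow> int" where
  "reverse_config n x = (\<lambda>i. if i < n then x (n - 1 - i) else 0)"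

lemma fdca_rule_mirror_coeffs: "fdca_rule d (mirror_coeffs c) x y z = fdca_rule d c z y x"
  by (simp add: fdca_rule_def mirror_coeffs_def algebra_simps)

lemma reverse_config_in_configs: "x \<in> configs d n \<Longrightarrow> reverse_config n x \<in> configs d n"
  by (simp add: configs_def reverse_config_def)

lemma reverse_config_reverse_config:
  "x \<in> configs d n \<Longrightarrow> reverse_config n (reverse_config n x) = x"
  by (auto simp: reverse_config_def configs_def fun_eq_iff)

lemma global_map_mirror_coeffs:
  "global_map d (mirror_coeffs c) n (reverse_config n x) = reverse_config n (global_map d c n x)"
proof
  fix i
  show "global_map d (mirror_coeffs c) n (reverse_config n x) i = reverse_config n (global_map d c n x) i"
  proof (cases "i < n")
    case True
    have "i - 1 < n" "n - 1 - (i - 1) = n - 1 - i + 1" if "i \<noteq> 0" using that True by auto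
    with True show ?thesis
      by (auto simp: global_map_def reverse_config_def fdca_rule_mirror_coeffs)
  qed (simp add: global_map_def reverse_config_def)
qed

lemma inj_on_global_map_mirror_coeffs:
  assumes "0 < d" and inj: "inj_on (global_map d c n) (configs d n)"
  shows "inj_on (global_map d (mirror_coeffs c) n) (configs d n)"
proof (rule inj_onI)
  fix x y assume x: "x \<in> configs d n" and y: "y \<in> configs d n"
    and eq: "global_map d (mirror_coeffs c) n x = global_map d (mirror_coeffs c) n y"
  let ?x = "reverse_config n x" and ?y = "reverse_config n y"
  have "reverse_config n (global_map d c n ?x) = reverse_config n (global_map d c n ?y)"
    using eq x y by (simp add: global_map_mirror_coeffs [symmetric] reverse_config_reverse_config)
  then have "global_map d c n ?x = global_map d c n ?y"
    by (metis reverse_config_reverse_config global_map_in_configs \<open>0 < d\<close>)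
  then have "?x = ?y"
    using inj x y by (simp add: inj_on_eq_iff reverse_config_in_configs)
  then show "x = y"
    by (metis reverse_config_reverse_config x y)
qed

definition right_coeff :: "(nat \<Rightarrow> int) \<Rightarrow> int \<Rightarrow> int \<Rightarrow> int" where
  "right_coeff c x y = c 0 * x * y + c 2 * x + c 3 * y + c 6"

lemma fdca_rule_indep_right:
  assumes "m dvd right_coeff c x y"
  shows "fdca_rule m c x y z = fdca_rule m c x y 0"
proof -
  have "c 0 * x * y * z + c 1 * x * y + c 2 * x * z + c 3 * y * z + c 4 * x + c 5 * y + c 6 * z + c 7
      - (c 1 * x * y + c 4 * x + c 5 * y + c 7) = right_coeff c x y * z"
    by (simp add: right_coeff_def algebra_simps)
  then show ?thesis
    using assms by (simp add: fdca_rule_def mod_eq_dvd_iff)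
qed

lemma dvd_c3_if_inj_on_global_map_2:
  assumes p: "prime p" and c6: "\<not> p dvd c 6" and inj: "inj_on (global_map p c 2) (configs p 2)"
  shows "p dvd c 3"
proof (rule ccontr)
  assume "\<not> p dvd c 3"
  then obtain t where t: "0 \<le> t" "t < p" "[c 3 * t = - c 6] (mod p)"
    using prime_cong_solvable[OF p] by metis
  obtain b where b: "0 \<le> b" "b < p" "[c 6 * b = c 5 * t] (mod p)"
    using prime_cong_solvable[OF p c6] by metis
  have "p dvd right_coeff c 0 t"
    using t(3) by (simp add: right_coeff_def cong_iff_dvd_diff)
  with c6 have "t \<noteq> 0" by (auto simp: right_coeff_def)
  have "0 < p" using p prime_gt_0_int by blast
  have "config_of_list [0, b] \<in> (\<lambda>z. config_of_list [t, z]) ` {0..<p}"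
  proof (rule inj_on_global_map_family_exhausts[OF inj \<open>0 < p\<close>, where j = 1])
    show "(\<lambda>z. config_of_list [t, z]) ` {0..<p} \<subseteq> configs p 2"
      using t by (auto intro!: config_of_list_in_configs)
    show "config_of_list [0, b] \<in> configs p 2"
      using b \<open>0 < p\<close> by (auto intro!: config_of_list_in_configs)
    show "inj_on (\<lambda>z. config_of_list [t, z]) {0..<p}"
      by (rule inj_onI) (drule fun_cong[where x = 1], simp add: config_of_list_def)
    fix z and i :: nat assume "i \<noteq> 1"
    have "fdca_rule p c 0 t z = fdca_rule p c 0 t 0"
      using \<open>p dvd right_coeff c 0 t\<close> by (rule fdca_rule_indep_right)
    also have "\<dots> = fdca_rule p c 0 0 b"
      using b(3) by (simp add: fdca_rule_def cong_def [symmetric] cong_add_rcancel cong_sym_eq)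
    finally have "fdca_rule p c 0 t z = fdca_rule p c 0 0 b" .
    then show "global_map p c 2 (config_of_list [t, z]) i = global_map p c 2 (config_of_list [0, b]) i"
      using \<open>i \<noteq> 1\<close> by (cases "i = 0") (simp_all add: global_map_def config_of_list_def)
  qed
  then show False
    using \<open>t \<noteq> 0\<close> by (auto dest: fun_cong[where x = 0] simp: config_of_list_def)
qed

lemma not_dvd_right_coeff_if_inj_on_global_map_3:
  assumes p: "prime p" and c6: "\<not> p dvd c 6" and c3: "p dvd c 3"
    and inj: "inj_on (global_map p c 3) (configs p 3)"
    and t: "0 < t" "t < p" and u: "0 \<le> u" "u < p"
  shows "\<not> p dvd right_coeff c t u"
proof
  assume indep: "p dvd right_coeff c t u"
  \<comment> \<open>b and w make the image of [0, b, w] agree with that of every [t, u, z] in cells 0 and 1\<close>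
  obtain b where b: "0 \<le> b" "b < p" "[c 6 * b = c 5 * t + c 6 * u] (mod p)"
    using prime_cong_solvable[OF p c6] by metis
  obtain w where w: "0 \<le> w" "w < p" "[c 6 * w = c 1 * t * u + c 4 * t + c 5 * u - c 5 * b] (mod p)"
    using prime_cong_solvable[OF p c6] by metis
  have cell0: "fdca_rule p c 0 t u = fdca_rule p c 0 0 b"
  proof -
    have "p dvd c 3 * (t * u) - (c 6 * b - (c 5 * t + c 6 * u))"
      using c3 b(3) by (simp add: cong_iff_dvd_diff)
    also have "c 3 * (t * u) - (c 6 * b - (c 5 * t + c 6 * u))
        = c 3 * t * u + c 5 * t + c 6 * u - c 6 * b"
      by (simp add: algebra_simps)
    finally show ?thesis by (simp add: fdca_rule_def mod_eq_dvd_iff)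
  qed
  have cell1: "fdca_rule p c t u z = fdca_rule p c 0 b w" for z
  proof -
    have "p dvd (c 1 * t * u + c 4 * t + c 5 * u - c 5 * b - c 6 * w) - c 3 * (b * w)"
      using c3 w(3) by (simp add: cong_iff_dvd_diff dvd_diff_commute)
    also have "(c 1 * t * u + c 4 * t + c 5 * u - c 5 * b - c 6 * w) - c 3 * (b * w)
        = c 1 * t * u + c 4 * t + c 5 * u - (c 3 * b * w + c 5 * b + c 6 * w)"
      by (simp add: algebra_simps)
    finally have "fdca_rule p c t u 0 = fdca_rule p c 0 b w"
      by (simp add: fdca_rule_def mod_eq_dvd_iff)
    with fdca_rule_indep_right[OF indep, of z] show ?thesis by simp
  qed
  have "0 < p" using t by simp
  have "config_of_list [0, b, w] \<in> (\<lambda>z. config_of_list [t, u, z]) ` {0..<p}"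
  proof (rule inj_on_global_map_family_exhausts[OF inj \<open>0 < p\<close>, where j = 2])
    show "(\<lambda>z. config_of_list [t, u, z]) ` {0..<p} \<subseteq> configs p 3"
      using t u by (auto intro!: config_of_list_in_configs)
    show "config_of_list [0, b, w] \<in> configs p 3"
      using b w \<open>0 < p\<close> by (auto intro!: config_of_list_in_configs)
    show "inj_on (\<lambda>z. config_of_list [t, u, z]) {0..<p}"
      by (rule inj_onI) (drule fun_cong[where x = 2], simp add: config_of_list_def)
    fix z and i :: nat assume "i \<noteq> 2"
    then consider "i = 0" | "i = 1" | "3 \<le> i" by linarith
    then show "global_map p c 3 (config_of_list [t, u, z]) i = global_map p c 3 (config_of_list [0, b, w]) i"
      by cases (simp_all add: global_map_def config_of_list_def cell0 cell1)
  qed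
  then show False
    using t by (auto dest: fun_cong[where x = 0] simp: config_of_list_def)
qed

lemma returns_to_start_if_finite_range:
  fixes X :: "nat \<Rightarrow> 'a"
  assumes "finite (range X)" and step_inj: "\<And>a b. X (Suc a) = X (Suc b) \<Longrightarrow> X a = X b"
  shows "\<exists>k>0. X k = X 0"
proof -
  obtain i j where ij: "i < j" "X i = X j"
    using assms(1) by (metis finite_imageD infinite_UNIV_nat injI linorder_neqE_nat)
  have "X (i - k) = X (j - k)" if "k \<le> i" for k
    using that
  proof (induction k)
    case (Suc k)
    then have "X (Suc (i - Suc k)) = X (Suc (j - Suc k))"
      using ij(1) by (simp add: Suc_diff_Suc)
    then show ?case by (rule step_inj)
  qed (use ij in simp)
  from this[of i] have "X (j - i) = X 0" by simp
  with ij(1) show ?thesis by (metis zero_less_diff)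
qed

fun lucas_seq :: "int \<Rightarrow> int \<Rightarrow> int \<Rightarrow> nat \<Rightarrow> int" where
  "lucas_seq m P Q 0 = 0"
| "lucas_seq m P Q (Suc 0) = 1"
| "lucas_seq m P Q (Suc (Suc k)) = (P * lucas_seq m P Q (Suc k) - Q * lucas_seq m P Q k) mod m"

lemma lucas_seq_range: "1 < m \<Longrightarrow> lucas_seq m P Q k \<in> {0..<m}"
  by (induction m P Q k rule: lucas_seq.induct) auto

lemma lucas_seq_returns_to_zero:
  assumes "1 < m" and "coprime Q m"
  shows "\<exists>k\<ge>2. lucas_seq m P Q k = 0"
proof -
  let ?U = "lucas_seq m P Q"
  have "finite (range (\<lambda>k. (?U k, ?U (Suc k))))"
    by (rule finite_subset[of _ "{0..<m} \<times> {0..<m}"]) (use lucas_seq_range[OF \<open>1 < m\<close>] in auto)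
  moreover have "(?U a, ?U (Suc a)) = (?U b, ?U (Suc b))"
    if "(?U (Suc a), ?U (Suc (Suc a))) = (?U (Suc b), ?U (Suc (Suc b)))" for a b
  proof -
    from that have "(P * ?U (Suc a) - Q * ?U a) mod m = (P * ?U (Suc a) - Q * ?U b) mod m"
      by (metis lucas_seq.simps(3) prod.inject)
    then have "m dvd Q * (?U b - ?U a)"
      by (simp add: mod_eq_dvd_iff algebra_simps)
    then have "m dvd ?U b - ?U a"
      using \<open>coprime Q m\<close> by (simp add: coprime_dvd_mult_right_iff coprime_dvd_mult_left_iff coprime_commute)
    then have "?U a = ?U b"
      using lucas_seq_range[OF \<open>1 < m\<close>] by (metis mod_eq_dvd_iff atLeastLessThan_iff mod_pos_pos_trivial)
    with that show ?thesis by simp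
  qed
  ultimately have "\<exists>k>0. (?U k, ?U (Suc k)) = (?U 0, ?U (Suc 0))"
    by (rule returns_to_start_if_finite_range)
  then obtain k where "k > 0" "?U k = 0"
    by auto
  moreover have "k \<noteq> 1"
    using \<open>?U k = 0\<close> by auto
  ultimately show ?thesis
    by (intro exI[of _ k]) simp
qed

lemma global_map_window:
  assumes "u 0 = 0" "u (Suc n) = 0" "k < n"
  shows "global_map d c n (\<lambda>i. if i < n then u (Suc i) else 0) k
       = fdca_rule d c (u k) (u (Suc k)) (u (Suc (Suc k)))"
proof -
  have "u (Suc (Suc k)) = 0" if "\<not> Suc k < n"
    using that assms by (metis Suc_lessI)
  with assms show ?thesis by (cases k) (auto simp: global_map_def)
qed

lemma fdca_rule_linear:
  assumes "p dvd c 0" "p dvd c 1" "p dvd c 2" "p dvd c 3"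
  shows "fdca_rule p c x y z = (c 4 * x + c 5 * y + c 6 * z + c 7) mod p"
proof -
  have "p dvd c 0 * (x * y * z) + c 1 * (x * y) + c 2 * (x * z) + c 3 * (y * z)"
    using assms by simp
  then show ?thesis
    by (simp add: fdca_rule_def mod_eq_dvd_iff algebra_simps)
qed

lemma linear_rule_not_inj:
  assumes p: "prime p" and c4: "\<not> p dvd c 4" and c6: "\<not> p dvd c 6"
    and lin: "p dvd c 0" "p dvd c 1" "p dvd c 2" "p dvd c 3"
  shows "\<exists>n\<ge>1. \<not> inj_on (global_map p c n) (configs p n)"
proof -
  have "1 < p" using p prime_gt_1_int by blast
  \<comment> \<open>P = - c5 / c6 and Q = c4 / c6 put c4 u(k) + c5 u(k+1) + c6 u(k+2) = 0 into Lucas form\<close>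
  obtain P where P: "[c 6 * P = - c 5] (mod p)"
    using prime_cong_solvable[OF p c6] by metis
  obtain Q where Q: "[c 6 * Q = c 4] (mod p)"
    using prime_cong_solvable[OF p c6] by metis
  have "\<not> p dvd Q"
    using Q c4 by (metis cong_dvd_iff dvd_mult)
  then have "coprime Q p"
    using p by (meson prime_imp_coprime coprime_commute)
  define U where "U = lucas_seq p P Q"
  obtain m where "m \<ge> 2" "U m = 0"
    using lucas_seq_returns_to_zero[OF \<open>1 < p\<close> \<open>coprime Q p\<close>] unfolding U_def by blast
  have U_rec: "p dvd c 4 * U k + c 5 * U (Suc k) + c 6 * U (Suc (Suc k))" for k
  proof -
    have "[c 6 * U (Suc (Suc k)) = (c 6 * P) * U (Suc k) - (c 6 * Q) * U k] (mod p)"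
      by (simp add: U_def cong_def mod_simps algebra_simps)
    also have "[(c 6 * P) * U (Suc k) - (c 6 * Q) * U k = - c 5 * U (Suc k) - c 4 * U k] (mod p)"
      by (intro cong_diff cong_mult cong_refl P Q)
    finally show ?thesis
      by (simp add: cong_iff_dvd_diff algebra_simps)
  qed
  define n where "n = m - 1"
  define x where "x = (\<lambda>i. if i < n then U (Suc i) else 0)"
  have "n \<ge> 1" "U (Suc n) = 0" using \<open>m \<ge> 2\<close> \<open>U m = 0\<close> by (simp_all add: n_def)
  have "x \<in> configs p n"
    using lucas_seq_range[OF \<open>1 < p\<close>] by (simp add: x_def U_def configs_def)
  moreover have "(\<lambda>_. 0) \<in> configs p n"
    using \<open>1 < p\<close> by (simp add: configs_def)
  moreover have "x \<noteq> (\<lambda>_. 0)"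
  proof -
    have "x 0 = 1" using \<open>n \<ge> 1\<close> by (simp add: x_def U_def)
    then show ?thesis by auto
  qed
  moreover have "global_map p c n x = global_map p c n (\<lambda>_. 0)"
  proof
    fix k
    show "global_map p c n x k = global_map p c n (\<lambda>_. 0) k"
    proof (cases "k < n")
      case True
      have "global_map p c n x k = (c 4 * U k + c 5 * U (Suc k) + c 6 * U (Suc (Suc k)) + c 7) mod p"
        unfolding x_def using True \<open>U (Suc n) = 0\<close>
        by (simp add: global_map_window U_def fdca_rule_linear[OF lin])
      also have "\<dots> = c 7 mod p"
        using U_rec[of k] by (simp add: mod_eq_dvd_iff)
      finally show ?thesis
        using True by (simp add: global_map_def fdca_rule_def)
    qed (simp add: global_map_def)
  qed
  ultimately show ?thesis
    using \<open>n \<ge> 1\<close> by (meson inj_onD)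
qed

lemma dvd_c4_c6_if_inj_on_global_map:
  assumes p: "prime p" and inj: "\<And>n. n \<ge> 1 \<Longrightarrow> inj_on (global_map p c n) (configs p n)"
  shows "p dvd c 4 * c 6"
proof (rule ccontr)
  assume "\<not> p dvd c 4 * c 6"
  then have c4: "\<not> p dvd c 4" and c6: "\<not> p dvd c 6" by auto
  have "1 < p" using p prime_gt_1_int by blast
  have c3: "p dvd c 3"
    using dvd_c3_if_inj_on_global_map_2[OF p c6 inj] by simp
  have "p dvd mirror_coeffs c 3"
  proof (rule dvd_c3_if_inj_on_global_map_2[OF p])
    show "\<not> p dvd mirror_coeffs c 6"
      using c4 by (simp add: mirror_coeffs_def)
    show "inj_on (global_map p (mirror_coeffs c) 2) (configs p 2)"
      using inj_on_global_map_mirror_coeffs[OF _ inj] \<open>1 < p\<close> by simp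
  qed
  then have c1: "p dvd c 1" by (simp add: mirror_coeffs_def)
  have c0: "p dvd c 0"
  proof (rule ccontr)
    assume "\<not> p dvd c 0"
    then obtain u where u: "0 \<le> u" "u < p" "[c 0 * u = - c 2 - c 6] (mod p)"
      using prime_cong_solvable[OF p] by metis
    have "p dvd c 3 * u + (c 0 * u - (- c 2 - c 6))"
      using c3 u(3) by (simp add: cong_iff_dvd_diff)
    then have "p dvd right_coeff c 1 u"
      by (simp add: right_coeff_def algebra_simps)
    with not_dvd_right_coeff_if_inj_on_global_map_3[OF p c6 c3 inj] u \<open>1 < p\<close> show False
      by simp
  qed
  have c2: "p dvd c 2"
  proof (rule ccontr)
    assume "\<not> p dvd c 2"
    then obtain t where t: "0 \<le> t" "t < p" "[c 2 * t = - c 6] (mod p)"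
      using prime_cong_solvable[OF p] by metis
    then have "p dvd right_coeff c t 0"
      by (simp add: right_coeff_def cong_iff_dvd_diff)
    moreover from this c6 have "t \<noteq> 0"
      by (auto simp: right_coeff_def)
    ultimately show False
      using not_dvd_right_coeff_if_inj_on_global_map_3[OF p c6 c3 inj] t \<open>1 < p\<close> by simp
  qed
  from linear_rule_not_inj[OF p c4 c6 c0 c1 c2 c3] inj show False
    by blast
qed

theorem lemma3:
  fixes d :: int and c :: "nat \<Rightarrow> int"
  assumes "d \<ge> 2"
    and "\<forall>i<8. 0 \<le> c i \<and> c i < d"
    and "\<forall>n\<ge>1. reversible d c n"
  shows "(c 4 * c 6) mod rad d = 0"
proof -
  \<comment> \<open>the bounds on the coefficients are not needed: only their residues modulo primes matter\<close>
  have "rad d dvd c 4 * c 6"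
    unfolding rad_def
  proof (rule prod_primes_dvd)
    fix p assume "p \<in> prime_factors d"
    then have p: "prime p" "p dvd d" "0 < p"
      using prime_gt_0_int by (auto simp: prime_factors_dvd)
    have "inj_on (global_map p c n) (configs p n)" if "n \<ge> 1" for n
      using assms(1,3) p(2,3) that by (intro inj_on_global_map_if_reversible[where d = d]) auto
    with p show "prime p \<and> p dvd c 4 * c 6"
      using dvd_c4_c6_if_inj_on_global_map by blast
  qed simp
  then show ?thesis by simp
qed

end
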